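(* Let $\Delta\ge3$ and $k\ge2$, and let $X$ be the $k\times k$ symmetric tridiagonal matrix with diagonal entries $0,\dots,0,2$ (zeros in positions $1,\dots,k-1$ and $2$ in position $k$), off-diagonal entries in positions $(j,j+1),(j+1,j)$ equal to $\sqrt{\Delta-1}$ for $1\le j\le k-2$, and equal to $\sqrt{\Delta-2}$ for $j=k-1$. If $\Delta\ge4$, or $\Delta=3$ and $k\ge4$, then \[ \rho(X)<2\sqrt{\Delta-1}\cos\frac{\pi}{2k+1}, \] where $\rho(X)$ is the spectral radius of $X$. *)

theory Defs
  imports Complex_Main "Jordan_Normal_Form.Spectral_Radius"
begin

definition tridiagX :: "nat \<Rightarrow> nat \<Rightarrow> complex mat" where
  "tridiagX \<Delta> k = mat k k (\<lambda>(i, j).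
     if i = j then (if i = k - 1 then 2 else 0)
     else if i = j + 1 \<or> j = i + 1 then
       (if min i j < k - 2 then complex_of_real (sqrt (real \<Delta> - 1))
        else complex_of_real (sqrt (real \<Delta> - 2)))
     else 0)"

end

theory Submission
  imports Defs "HOL-Analysis.Complex_Transcendental"
begin

text \<open>
  The bound is of Collatz--Wielandt type. Let \<open>A\<close> be a nonnegative matrix with positive
  superdiagonal and \<open>v\<close> a positive vector with \<open>A v \<le> \<lambda> v\<close> componentwise, strictly in the last
  row. If \<open>A x = \<mu> x\<close> with \<open>|\<mu>| \<ge> \<lambda>\<close>, then at an index \<open>i\<close> maximising \<open>|x\<^sub>i| / v\<^sub>i\<close> the triangle
  inequality in row \<open>i\<close> is an equality, so the maximum is also attained at \<open>i + 1\<close>; following the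
  superdiagonal one reaches the last row, where equality is impossible.

  For \<open>X\<close> take \<open>\<lambda> = 2 \<sqrt>(\<Delta>-1) cos \<theta>\<close> with \<open>\<theta> = \<pi>/(2k+1)\<close> and \<open>v\<^sub>i = sin (i \<theta>)\<close> for \<open>i = 1, \<dots>, k-1\<close>:
  the sine recurrence makes the rows with weights \<open>\<sqrt>(\<Delta>-1)\<close> exact. A last coordinate \<open>t\<close> making
  the two remaining rows strict exists iff \<open>(\<Delta>-2) sin ((k-1)\<theta>) < \<sqrt>(\<Delta>-1) (\<lambda>-2) sin (k\<theta>)\<close>. With
  \<open>u = \<theta>/2\<close> one has \<open>sin (k\<theta>) = cos u\<close> and \<open>sin ((k-1)\<theta>) = cos (3u)\<close>, and the difference of the two
  sides factors as \<open>cos u ((\<sqrt>(\<Delta>-1) - 1)\<^sup>2 - 4 sin\<^sup>2 u)\<close>, which is positive because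
  \<open>2 sin u \<le> 2u = \<pi>/(2k+1) < \<sqrt>(\<Delta>-1) - 1\<close> under the hypotheses on \<open>\<Delta>\<close> and \<open>k\<close>.
\<close>

section \<open>A Collatz--Wielandt bound\<close>

lemma eigen_row_tight:
  fixes a v :: "nat \<Rightarrow> real" and x :: "nat \<Rightarrow> complex"
  assumes nonneg: "\<And>j. j < n \<Longrightarrow> 0 \<le> a j"
    and sub: "(\<Sum>j<n. a j * v j) \<le> l * v m"
    and eigen: "\<mu> * x m = (\<Sum>j<n. a j * x j)"
    and bound: "\<And>j. j < n \<Longrightarrow> cmod (x j) \<le> t * v j"
    and tight: "cmod (x m) = t * v m"
    and "l \<le> cmod \<mu>" and "0 < t" and "0 \<le> v m"
  shows "(\<Sum>j<n. a j * v j) = l * v m"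
    and "\<And>j. j < n \<Longrightarrow> 0 < a j \<Longrightarrow> cmod (x j) = t * v j"
proof -
  have "cmod \<mu> * cmod (x m) \<le> (\<Sum>j<n. cmod (a j * x j))"
    unfolding norm_mult[symmetric] eigen by (rule norm_sum)
  also have "\<dots> = (\<Sum>j<n. a j * cmod (x j))"
    using nonneg by (intro sum.cong) (auto simp: norm_mult)
  finally have triangle: "cmod \<mu> * cmod (x m) \<le> (\<Sum>j<n. a j * cmod (x j))" .
  have dominated: "(\<Sum>j<n. a j * cmod (x j)) \<le> (\<Sum>j<n. a j * (t * v j))"
    using nonneg bound by (intro sum_mono mult_left_mono) auto
  have scale: "(\<Sum>j<n. a j * (t * v j)) = t * (\<Sum>j<n. a j * v j)"
    by (simp add: sum_distrib_left algebra_simps)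
  have sub_scaled: "t * (\<Sum>j<n. a j * v j) \<le> t * (l * v m)"
    using sub \<open>0 < t\<close> by simp
  have "t * (l * v m) \<le> cmod \<mu> * cmod (x m)"
    using \<open>l \<le> cmod \<mu>\<close> \<open>0 < t\<close> \<open>0 \<le> v m\<close> tight by (simp add: mult_right_mono)
  then have chain_eq:
    "(\<Sum>j<n. a j * cmod (x j)) = (\<Sum>j<n. a j * (t * v j))"
    "t * (\<Sum>j<n. a j * v j) = t * (l * v m)"
    using triangle dominated scale sub_scaled by linarith+
  show "(\<Sum>j<n. a j * v j) = l * v m"
    using chain_eq(2) \<open>0 < t\<close> by simp
  have "(\<Sum>j<n. a j * (t * v j - cmod (x j))) = 0"
    using chain_eq(1) by (simp add: sum_subtractf right_diff_distrib)
  then have "\<forall>j\<in>{..<n}. a j * (t * v j - cmod (x j)) = 0"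
    using nonneg bound by (subst sum_nonneg_eq_0_iff[symmetric]) auto
  then show "\<And>j. j < n \<Longrightarrow> 0 < a j \<Longrightarrow> cmod (x j) = t * v j"
    by force
qed

lemma obtain_max_ratio:
  fixes x :: "nat \<Rightarrow> complex" and v :: "nat \<Rightarrow> real"
  assumes v_pos: "\<And>i. i < n \<Longrightarrow> 0 < v i" and nonzero: "j0 < n" "x j0 \<noteq> 0"
  obtains t i0 where "0 < t" "i0 < n" "cmod (x i0) = t * v i0"
    "\<And>j. j < n \<Longrightarrow> cmod (x j) \<le> t * v j"
proof -
  define ratio where "ratio i = cmod (x i) / v i" for i
  define t where "t = Max (ratio ` {..<n})"
  have "t \<in> ratio ` {..<n}"
    unfolding t_def using nonzero by (intro Max_in) auto
  then obtain i0 where i0: "i0 < n" "cmod (x i0) = t * v i0"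
    using v_pos unfolding ratio_def by (force simp: field_simps)
  have bound: "cmod (x j) \<le> t * v j" if "j < n" for j
  proof -
    have "ratio j \<le> t"
      unfolding t_def using that by auto
    then show ?thesis
      using v_pos[OF that] unfolding ratio_def by (simp add: divide_le_eq)
  qed
  have "0 < cmod (x j0)"
    using nonzero(2) by simp
  also have "\<dots> \<le> t * v j0"
    using bound[OF nonzero(1)] .
  finally have "0 < t"
    using v_pos[OF nonzero(1)] by (simp add: zero_less_mult_iff)
  then show ?thesis
    using i0 bound by (rule that)
qed

lemma cmod_eigenvalue_lt_subinvariant:
  fixes a :: "nat \<Rightarrow> nat \<Rightarrow> real" and v :: "nat \<Rightarrow> real" and x :: "nat \<Rightarrow> complex"
  assumes nonneg: "\<And>i j. i < n \<Longrightarrow> j < n \<Longrightarrow> 0 \<le> a i j"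
    and superdiag: "\<And>i. i + 1 < n \<Longrightarrow> 0 < a i (i + 1)"
    and v_pos: "\<And>i. i < n \<Longrightarrow> 0 < v i"
    and sub: "\<And>i. i < n \<Longrightarrow> (\<Sum>j<n. a i j * v j) \<le> l * v i"
    and strict_last: "(\<Sum>j<n. a (n - 1) j * v j) < l * v (n - 1)"
    and eigen: "\<And>i. i < n \<Longrightarrow> \<mu> * x i = (\<Sum>j<n. a i j * x j)"
    and nonzero: "j0 < n" "x j0 \<noteq> 0"
  shows "cmod \<mu> < l"
proof (rule ccontr)
  assume "\<not> cmod \<mu> < l"
  then have large: "l \<le> cmod \<mu>"
    by simp
  obtain t i0 where "0 < t" and i0: "i0 < n" "cmod (x i0) = t * v i0"
    and bound: "\<And>j. j < n \<Longrightarrow> cmod (x j) \<le> t * v j"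
    using obtain_max_ratio[of n v j0 x, OF v_pos nonzero] by blast
  have tight: "cmod (x (i0 + d)) = t * v (i0 + d)" if "i0 + d < n" for d
    using that
  proof (induction d)
    case 0
    then show ?case using i0 by simp
  next
    case (Suc d)
    let ?m = "i0 + d"
    have "?m < n"
      using Suc.prems by simp
    note row_tight = eigen_row_tight[of n "a ?m", OF nonneg sub eigen bound Suc.IH large \<open>0 < t\<close>]
    show ?case
      using row_tight(2)[of "?m + 1"] superdiag[of ?m] Suc.prems \<open>?m < n\<close> v_pos[of ?m]
      by simp
  qed
  have "cmod (x (n - 1)) = t * v (n - 1)"
    using tight[of "n - 1 - i0"] i0 by simp
  then have "(\<Sum>j<n. a (n - 1) j * v j) = l * v (n - 1)"
    using nonzero(1) v_pos[of "n - 1"]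
    by (intro eigen_row_tight(1)[of n "a (n - 1)", OF nonneg sub eigen bound _ large \<open>0 < t\<close>]) auto
  with strict_last show False
    by simp
qed

lemma spectral_radius_lt_subinvariant:
  fixes A :: "complex mat" and a :: "nat \<Rightarrow> nat \<Rightarrow> real" and v :: "nat \<Rightarrow> real"
  assumes A: "A \<in> carrier_mat n n" and "0 < n"
    and entries: "\<And>i j. i < n \<Longrightarrow> j < n \<Longrightarrow> A $$ (i, j) = complex_of_real (a i j)"
    and nonneg: "\<And>i j. i < n \<Longrightarrow> j < n \<Longrightarrow> 0 \<le> a i j"
    and superdiag: "\<And>i. i + 1 < n \<Longrightarrow> 0 < a i (i + 1)"
    and v_pos: "\<And>i. i < n \<Longrightarrow> 0 < v i"
    and sub: "\<And>i. i < n \<Longrightarrow> (\<Sum>j<n. a i j * v j) \<le> l * v i"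
    and strict_last: "(\<Sum>j<n. a (n - 1) j * v j) < l * v (n - 1)"
  shows "spectral_radius A < l"
proof -
  obtain \<mu> where \<mu>: "\<mu> \<in> spectrum A" "spectral_radius A = cmod \<mu>"
    using spectral_radius_mem_max(1)[OF A \<open>0 < n\<close>] by auto
  then obtain x where x: "x \<in> carrier_vec n" "x \<noteq> 0\<^sub>v n" "A *\<^sub>v x = \<mu> \<cdot>\<^sub>v x"
    using A unfolding spectrum_def eigenvalue_def eigenvector_def by auto
  then obtain j0 where "j0 < n" "x $ j0 \<noteq> 0"
    by (metis carrier_vecD eq_vecI index_zero_vec(1,2))
  have "\<mu> * x $ i = (\<Sum>j<n. a i j * x $ j)" if "i < n" for i
  proof -
    have "(A *\<^sub>v x) $ i = (\<mu> \<cdot>\<^sub>v x) $ i"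
      using x(3) by simp
    then show ?thesis
      using that x(1) A entries by (auto simp: scalar_prod_def row_def atLeast0LessThan)
  qed
  then have "cmod \<mu> < l"
    using cmod_eigenvalue_lt_subinvariant[where x = "\<lambda>i. x $ i", OF nonneg superdiag v_pos sub
          strict_last _ \<open>j0 < n\<close> \<open>x $ j0 \<noteq> 0\<close>] by blast
  with \<mu>(2) show ?thesis
    by simp
qed

section \<open>The tridiagonal matrix and its test vector\<close>

lemma sum_tridiagonal:
  fixes f :: "nat \<Rightarrow> 'a::comm_monoid_add"
  assumes i: "i < n"
    and zero: "\<And>j. j < n \<Longrightarrow> j \<noteq> i \<Longrightarrow> j + 1 \<noteq> i \<Longrightarrow> j \<noteq> i + 1 \<Longrightarrow> f j = 0"
  shows "(\<Sum>j<n. f j) =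
    (if 0 < i then f (i - 1) else 0) + f i + (if i + 1 < n then f (i + 1) else 0)"
proof -
  define S where "S = {i} \<union> (if 0 < i then {i - 1} else {}) \<union> (if i + 1 < n then {i + 1} else {})"
  have "S \<subseteq> {..<n}"
    using i unfolding S_def by auto
  then have "(\<Sum>j<n. f j) = (\<Sum>j\<in>S. f j)"
    by (intro sum.mono_neutral_right) (auto simp: S_def intro!: zero)
  also have "\<dots> = (if 0 < i then f (i - 1) else 0) + f i + (if i + 1 < n then f (i + 1) else 0)"
    unfolding S_def by (cases "0 < i"; cases "i + 1 < n") (auto simp: add.commute add.left_commute)
  finally show ?thesis .
qed

definition tridiag_weight :: "real \<Rightarrow> real \<Rightarrow> nat \<Rightarrow> nat \<Rightarrow> nat \<Rightarrow> real" where
  "tridiag_weight s r k i j =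
    (if i = j then (if i = k - 1 then 2 else 0)
     else if i = j + 1 \<or> j = i + 1 then (if min i j < k - 2 then s else r)
     else 0)"

lemma tridiagX_entry:
  assumes "i < k" "j < k"
  shows "tridiagX \<Delta> k $$ (i, j) =
    complex_of_real (tridiag_weight (sqrt (real \<Delta> - 1)) (sqrt (real \<Delta> - 2)) k i j)"
  using assms by (simp add: tridiagX_def tridiag_weight_def)

lemma tridiag_weight_row_sum:
  fixes v :: "nat \<Rightarrow> real"
  assumes "2 \<le> k"
  shows tridiag_weight_row_sum_inner: "m + 2 < k \<Longrightarrow>
      (\<Sum>j<k. tridiag_weight s r k m j * v j) = (if m = 0 then 0 else s * v (m - 1)) + s * v (m + 1)"
    and tridiag_weight_row_sum_penultimate:
      "(\<Sum>j<k. tridiag_weight s r k (k - 2) j * v j) = (if k = 2 then 0 else s * v (k - 3)) + r * v (k - 1)"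
    and tridiag_weight_row_sum_last:
      "(\<Sum>j<k. tridiag_weight s r k (k - 1) j * v j) = r * v (k - 2) + 2 * v (k - 1)"
proof -
  have row: "(\<Sum>j<k. tridiag_weight s r k m j * v j) =
      (if 0 < m then tridiag_weight s r k m (m - 1) * v (m - 1) else 0)
      + tridiag_weight s r k m m * v m
      + (if m + 1 < k then tridiag_weight s r k m (m + 1) * v (m + 1) else 0)" if "m < k" for m
    using that by (intro sum_tridiagonal) (auto simp: tridiag_weight_def)
  define k' where "k' = k - 2"
  have k: "k = k' + 2"
    using assms unfolding k'_def by simp
  show "m + 2 < k \<Longrightarrow>
      (\<Sum>j<k. tridiag_weight s r k m j * v j) = (if m = 0 then 0 else s * v (m - 1)) + s * v (m + 1)"
    by (subst row) (auto simp: tridiag_weight_def)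
  show "(\<Sum>j<k. tridiag_weight s r k (k - 2) j * v j) = (if k = 2 then 0 else s * v (k - 3)) + r * v (k - 1)"
    by (subst row) (auto simp: k tridiag_weight_def)
  show "(\<Sum>j<k. tridiag_weight s r k (k - 1) j * v j) = r * v (k - 2) + 2 * v (k - 1)"
    by (subst row) (auto simp: k tridiag_weight_def)
qed

lemma sin_mult_recurrence:
  "sin (real n * \<theta>) + sin (real (n + 2) * \<theta>) = 2 * cos \<theta> * sin (real (n + 1) * \<theta>)"
proof -
  have "real n * \<theta> = real (n + 1) * \<theta> - \<theta>" "real (n + 2) * \<theta> = real (n + 1) * \<theta> + \<theta>"
    by (simp_all add: algebra_simps)
  then show ?thesis
    by (simp add: sin_add sin_diff)
qed

definition sine_test_vector :: "real \<Rightarrow> nat \<Rightarrow> real \<Rightarrow> nat \<Rightarrow> real" where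
  "sine_test_vector \<theta> k t i = (if i < k - 1 then sin (real (i + 1) * \<theta>) else t)"

lemma tridiag_weight_sine_test_vector_row:
  fixes s r \<theta> t :: real
  assumes k: "2 \<le> k" and m: "m < k - 1" and slack: "r * t < s * sin (real k * \<theta>)"
  shows "(\<Sum>j<k. tridiag_weight s r k m j * sine_test_vector \<theta> k t j)
    \<le> 2 * s * cos \<theta> * sine_test_vector \<theta> k t m"
proof (cases "m + 2 < k")
  case True
  then have "m + 1 < k - 1"
    by simp
  then have "(\<Sum>j<k. tridiag_weight s r k m j * sine_test_vector \<theta> k t j)
      = s * (sin (real m * \<theta>) + sin (real (m + 2) * \<theta>))"
    using True m
    by (cases m) (simp_all add: tridiag_weight_row_sum_inner[OF k] sine_test_vector_def algebra_simps)
  also have "\<dots> = 2 * s * cos \<theta> * sine_test_vector \<theta> k t m"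
    using m unfolding sin_mult_recurrence by (simp add: sine_test_vector_def)
  finally show ?thesis
    by simp
next
  case False
  then have m: "m = k - 2" "k - 2 + 1 = k - 1" "k \<noteq> 2 \<Longrightarrow> k - 3 + 1 = k - 2"
    using k m by simp_all
  have "(\<Sum>j<k. tridiag_weight s r k m j * sine_test_vector \<theta> k t j)
      = s * sin (real (k - 2) * \<theta>) + r * t"
    unfolding m(1) tridiag_weight_row_sum_penultimate[OF k]
    using m(3) by (cases "k = 2") (auto simp: sine_test_vector_def)
  also have "\<dots> < s * (sin (real (k - 2) * \<theta>) + sin (real (k - 2 + 2) * \<theta>))"
    using slack k by (simp add: algebra_simps)
  also have "\<dots> = 2 * s * cos \<theta> * sine_test_vector \<theta> k t m"
    using m k unfolding sin_mult_recurrence by (simp add: sine_test_vector_def)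
  finally show ?thesis
    by simp
qed

lemma corner_slack:
  fixes r s a b l :: real
  assumes "0 < r" "0 < s" "0 < a" "0 < b" and corner: "r\<^sup>2 * a < s * (l - 2) * b"
  obtains t where "0 < t" "r * t < s * b" "r * a + 2 * t < l * t"
proof -
  have "0 < r\<^sup>2 * a"
    using \<open>0 < r\<close> \<open>0 < a\<close> by simp
  with corner have "0 < s * (l - 2) * b"
    by linarith
  then have "2 < l"
    using \<open>0 < s\<close> \<open>0 < b\<close> by (simp add: zero_less_mult_iff)
  have "r * a / (l - 2) < s * b / r"
    using corner \<open>2 < l\<close> \<open>0 < r\<close> by (simp add: divide_simps power2_eq_square algebra_simps)
  then obtain t where t: "r * a / (l - 2) < t" "t < s * b / r"
    using dense by blast
  have "0 < r * a / (l - 2)"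
    using \<open>0 < r\<close> \<open>0 < a\<close> \<open>2 < l\<close> by simp
  with t(1) have "0 < t"
    by linarith
  moreover have "r * t < s * b"
    using t(2) \<open>0 < r\<close> by (simp add: field_simps)
  moreover have "r * a + 2 * t < l * t"
    using t(1) \<open>2 < l\<close> by (simp add: field_simps)
  ultimately show ?thesis
    by (rule that)
qed

lemma spectral_radius_tridiag_weight_lt:
  fixes A :: "complex mat" and s r \<theta> :: real
  assumes A: "A \<in> carrier_mat k k"
    and entries: "\<And>i j. i < k \<Longrightarrow> j < k \<Longrightarrow> A $$ (i, j) = complex_of_real (tridiag_weight s r k i j)"
    and k: "2 \<le> k" and "0 < s" "0 < r" "0 < \<theta>" "real k * \<theta> < pi"
    and corner: "r\<^sup>2 * sin (real (k - 1) * \<theta>) < s * (2 * s * cos \<theta> - 2) * sin (real k * \<theta>)"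
  shows "spectral_radius A < 2 * s * cos \<theta>"
proof -
  have sin_pos: "0 < sin (real j * \<theta>)" if "0 < j" "j \<le> k" for j
  proof (rule sin_gt_zero)
    have "real j * \<theta> \<le> real k * \<theta>"
      using that \<open>0 < \<theta>\<close> by (simp add: mult_right_mono)
    then show "real j * \<theta> < pi"
      using \<open>real k * \<theta> < pi\<close> by linarith
  qed (use that \<open>0 < \<theta>\<close> in simp)
  obtain t where t: "0 < t" "r * t < s * sin (real k * \<theta>)"
    "r * sin (real (k - 1) * \<theta>) + 2 * t < 2 * s * cos \<theta> * t"
    using corner_slack[OF \<open>0 < r\<close> \<open>0 < s\<close> _ _ corner] sin_pos[of k] sin_pos[of "k - 1"] k by auto
  let ?v = "sine_test_vector \<theta> k t"
  have "k - 2 < k - 1" "k - 2 + 1 = k - 1"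
    using k by simp_all
  then have last: "(\<Sum>j<k. tridiag_weight s r k (k - 1) j * ?v j) < 2 * s * cos \<theta> * ?v (k - 1)"
    using t(3) unfolding tridiag_weight_row_sum_last[OF k] by (simp add: sine_test_vector_def)
  have sub: "(\<Sum>j<k. tridiag_weight s r k m j * ?v j) \<le> 2 * s * cos \<theta> * ?v m" if "m < k" for m
    using tridiag_weight_sine_test_vector_row[OF k _ t(2)] last that
    by (cases "m = k - 1") (auto simp: less_imp_le)
  have "0 < ?v i" for i
    using sin_pos[of "i + 1"] \<open>0 < t\<close> by (simp add: sine_test_vector_def)
  then show ?thesis
    using \<open>0 < s\<close> \<open>0 < r\<close> k
    by (intro spectral_radius_lt_subinvariant[OF A _ entries _ _ _ sub last])
      (auto simp: tridiag_weight_def)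
qed

section \<open>The corner inequality for \<open>\<theta> = \<pi> / (2k + 1)\<close>\<close>

lemma corner_factorization:
  fixes s u :: real
  shows "s * (2 * s * cos (2 * u) - 2) * cos u - (s\<^sup>2 - 1) * cos (3 * u)
    = cos u * ((s - 1)\<^sup>2 - 4 * (sin u)\<^sup>2)"
  unfolding cos_treble_cos cos_double_cos sin_squared_eq
  by (simp add: algebra_simps power2_eq_square power3_eq_cube)

lemma corner_inequality:
  fixes s :: real
  assumes k: "2 \<le> k" and gap: "2 * sin (pi / (4 * real k + 2)) < s - 1"
  defines "\<theta> \<equiv> pi / (2 * real k + 1)"
  shows "(s\<^sup>2 - 1) * sin (real (k - 1) * \<theta>) < s * (2 * s * cos \<theta> - 2) * sin (real k * \<theta>)"
proof -
  define u where "u = pi / (4 * real k + 2)"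
  have \<theta>: "\<theta> = 2 * u"
    unfolding \<theta>_def u_def by (simp add: field_simps)
  have "0 < u"
    unfolding u_def by simp
  have "3 * u = 3 * pi / (4 * real k + 2)"
    unfolding u_def by simp
  also have "\<dots> \<le> 3 * pi / 10"
    using k by (intro divide_left_mono) auto
  finally have "3 * u < pi / 2"
    using pi_gt_zero by linarith
  then have cos_pos: "0 < cos u" "0 < cos (3 * u)"
    using \<open>0 < u\<close> by (auto intro!: cos_gt_zero_pi)
  have "real k * \<theta> = pi / 2 - u" "real (k - 1) * \<theta> = pi / 2 - 3 * u"
    using k unfolding \<theta> u_def by (simp_all add: of_nat_diff field_simps)
  then have sines: "sin (real k * \<theta>) = cos u" "sin (real (k - 1) * \<theta>) = cos (3 * u)"
    by (simp_all add: sin_cos_eq)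
  have "0 \<le> sin u"
    using \<open>0 < u\<close> \<open>3 * u < pi / 2\<close> by (intro sin_ge_zero) auto
  then have "(2 * sin u)\<^sup>2 < (s - 1)\<^sup>2"
    using gap unfolding u_def[symmetric] by (intro power_strict_mono) auto
  then have "0 < cos u * ((s - 1)\<^sup>2 - 4 * (sin u)\<^sup>2)"
    using cos_pos by (simp add: power_mult_distrib)
  then have "(s\<^sup>2 - 1) * cos (3 * u) < s * (2 * s * cos \<theta> - 2) * cos u"
    unfolding \<theta> corner_factorization[symmetric] by simp
  then show ?thesis
    unfolding sines .
qed

lemma corner_gap:
  fixes \<Delta> k :: nat
  assumes "2 \<le> k" and "4 \<le> \<Delta> \<or> (\<Delta> = 3 \<and> 4 \<le> k)"
  shows "2 * sin (pi / (4 * real k + 2)) < sqrt (real \<Delta> - 1) - 1"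
proof -
  have "2 * sin (pi / (4 * real k + 2)) \<le> 2 * pi / (4 * real k + 2)"
    using sin_x_le_x[of "pi / (4 * real k + 2)"] by simp
  also have "\<dots> \<le> 63 / 10 / (4 * real k + 2)"
    using pi_approx(2) by (intro divide_right_mono) auto
  also have "\<dots> < sqrt (real \<Delta> - 1) - 1"
    using assms(2)
  proof
    assume "4 \<le> \<Delta>"
    have "63 / 10 / (4 * real k + 2) \<le> 63 / 100"
      using assms(1) by (simp add: field_simps)
    moreover have "173 / 100 \<le> sqrt (3::real)"
      by (rule real_le_rsqrt) (simp add: power2_eq_square)
    moreover have "sqrt 3 \<le> sqrt (real \<Delta> - 1)"
      using \<open>4 \<le> \<Delta>\<close> by simp
    ultimately show ?thesis
      by linarith
  next
    assume "\<Delta> = 3 \<and> 4 \<le> k"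
    then have "63 / 10 / (4 * real k + 2) \<le> 63 / 180" "sqrt (real \<Delta> - 1) = sqrt 2"
      by (simp_all add: field_simps)
    moreover have "141 / 100 \<le> sqrt (2::real)"
      by (rule real_le_rsqrt) (simp add: power2_eq_square)
    ultimately show ?thesis
      by linarith
  qed
  finally show ?thesis .
qed

theorem mainTheorem9:
  fixes \<Delta> k :: nat
  assumes "\<Delta> \<ge> 3" and "k \<ge> 2"
    and "\<Delta> \<ge> 4 \<or> (\<Delta> = 3 \<and> k \<ge> 4)"
  shows "spectral_radius (tridiagX \<Delta> k) < 2 * sqrt (real \<Delta> - 1) * cos (pi / (2 * real k + 1))"
proof -
  define s r \<theta> where "s = sqrt (real \<Delta> - 1)" and "r = sqrt (real \<Delta> - 2)"
    and "\<theta> = pi / (2 * real k + 1)"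
  have "0 < s" "0 < r" "r\<^sup>2 = s\<^sup>2 - 1"
    using assms(1) unfolding s_def r_def by simp_all
  have "0 < \<theta>" "real k * \<theta> < pi"
    unfolding \<theta>_def by (simp_all add: field_simps add_pos_nonneg)
  have carrier: "tridiagX \<Delta> k \<in> carrier_mat k k"
    unfolding tridiagX_def by simp
  have entries: "\<And>i j. i < k \<Longrightarrow> j < k \<Longrightarrow>
      tridiagX \<Delta> k $$ (i, j) = complex_of_real (tridiag_weight s r k i j)"
    unfolding s_def r_def by (rule tridiagX_entry)
  have corner: "r\<^sup>2 * sin (real (k - 1) * \<theta>) < s * (2 * s * cos \<theta> - 2) * sin (real k * \<theta>)"
    unfolding \<open>r\<^sup>2 = s\<^sup>2 - 1\<close> \<theta>_def s_def using assms(2,3) by (intro corner_inequality corner_gap)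
  have "spectral_radius (tridiagX \<Delta> k) < 2 * s * cos \<theta>"
    using carrier entries assms(2) \<open>0 < s\<close> \<open>0 < r\<close> \<open>0 < \<theta>\<close> \<open>real k * \<theta> < pi\<close> corner
    by (rule spectral_radius_tridiag_weight_lt)
  then show ?thesis
    unfolding s_def \<theta>_def .
qed

end
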